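(* Let $H=(W,F)$ be a graph, $xy$ a flat edge of $H$, and $B=(X,Y;E_{XY})$ a cobipartite graph disjoint from $H$ with $E_{XY}\neq\varnothing$. Let $G$ be the graph obtained by the augmentation of the edge $xy$ in $H$ using $B$, and let $D=(V,A)$ be a clique-acyclic orientation of $G$. Let $s_X,s_Y$ be the sinks of $D[X]$ and $D[Y]$ respectively, labelled so that $(s_X,s_Y)\notin A$. Let $U=Y\setminus N_G(s_X)$, let $S_U=\varnothing$ if $U=\varnothing$ and $S_U=\{s_U\}$ where $s_U$ is the sink of $D[U]$ otherwise, and let $Z=(V\setminus(X\cup Y))\cup\{s_X,s_Y\}\cup S_U$. Then every kernel of $D[Z]$ is a kernel of $D$.
   Context: An edge of an undirected graph is flat if it is contained in no triangle. A cobipartite graph $B=(X,Y;E_{XY})$ has vertex set partitioned into two cliques $X$ and $Y$, with $E_{XY}$ the set of edges between $X$ and $Y$. The augmentation of a flat edge $xy$ in $H$ using $B$ builds a graph from $H$ and $B$ by removing $x$, $y$ (and the edge $xy$) from $H$, and adding all edges between $X$ and $N_H(x)\setminus\{y\}$ and all edges between $Y$ and $N_H(y)\setminus\{x\}$. An orientation orients each edge in exactly one direction; it is clique-acyclic if every clique has a sink, i.e. a vertex receiving an arc from every other vertex of the clique. For a digraph $D=(V,A)$, a set $S$ is stable if no two vertices of $S$ are adjacent, absorbing if every $u\in V\setminus S$ has some $v\in S$ with $(u,v)\in A$; a kernel is a stable absorbing set. *)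

theory Defs
  imports Main
begin

definition graph :: "'a set \<Rightarrow> ('a \<times> 'a) set \<Rightarrow> bool" where
  "graph V E \<longleftrightarrow> E \<subseteq> V \<times> V \<and> sym E \<and> (\<forall>v. (v, v) \<notin> E)"

definition nbhd :: "('a \<times> 'a) set \<Rightarrow> 'a \<Rightarrow> 'a set" where
  "nbhd E v = {u. (v, u) \<in> E}"

definition flat_edge :: "('a \<times> 'a) set \<Rightarrow> 'a \<Rightarrow> 'a \<Rightarrow> bool" where
  "flat_edge E x y \<longleftrightarrow> (x, y) \<in> E \<and> \<not> (\<exists>z. (x, z) \<in> E \<and> (y, z) \<in> E)"

definition clique :: "('a \<times> 'a) set \<Rightarrow> 'a set \<Rightarrow> bool" where
  "clique E K \<longleftrightarrow> (\<forall>u\<in>K. \<forall>v\<in>K. u \<noteq> v \<longrightarrow> (u, v) \<in> E)"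

text \<open>Cobipartite graph B = (X, Y; E_XY): X, Y disjoint cliques, E_XY the edges between them
  (stored as pairs in X x Y).\<close>
definition cobipartite :: "'a set \<Rightarrow> 'a set \<Rightarrow> ('a \<times> 'a) set \<Rightarrow> bool" where
  "cobipartite X Y EXY \<longleftrightarrow> X \<inter> Y = {} \<and> EXY \<subseteq> X \<times> Y"

definition cobip_edges :: "'a set \<Rightarrow> 'a set \<Rightarrow> ('a \<times> 'a) set \<Rightarrow> ('a \<times> 'a) set" where
  "cobip_edges X Y EXY =
     {(u, v). u \<in> X \<and> v \<in> X \<and> u \<noteq> v} \<union> {(u, v). u \<in> Y \<and> v \<in> Y \<and> u \<noteq> v}
     \<union> EXY \<union> EXY\<inverse>"

definition aug_V :: "'a set \<Rightarrow> 'a \<Rightarrow> 'a \<Rightarrow> 'a set \<Rightarrow> 'a set \<Rightarrow> 'a set" where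
  "aug_V W x y X Y = (W - {x, y}) \<union> X \<union> Y"

definition aug_E :: "('a \<times> 'a) set \<Rightarrow> 'a \<Rightarrow> 'a \<Rightarrow> 'a set \<Rightarrow> 'a set \<Rightarrow> ('a \<times> 'a) set
    \<Rightarrow> ('a \<times> 'a) set" where
  "aug_E F x y X Y EXY =
     {(u, v). (u, v) \<in> F \<and> u \<notin> {x, y} \<and> v \<notin> {x, y}}
     \<union> cobip_edges X Y EXY
     \<union> (X \<times> (nbhd F x - {y})) \<union> (X \<times> (nbhd F x - {y}))\<inverse>
     \<union> (Y \<times> (nbhd F y - {x})) \<union> (Y \<times> (nbhd F y - {x}))\<inverse>"

definition orientation :: "('a \<times> 'a) set \<Rightarrow> ('a \<times> 'a) set \<Rightarrow> bool" where
  "orientation E A \<longleftrightarrow> A \<subseteq> E \<and> (\<forall>(u, v) \<in> E. (u, v) \<in> A \<longleftrightarrow> (v, u) \<notin> A)"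

definition is_sink :: "('a \<times> 'a) set \<Rightarrow> 'a set \<Rightarrow> 'a \<Rightarrow> bool" where
  "is_sink A K s \<longleftrightarrow> s \<in> K \<and> (\<forall>u \<in> K - {s}. (u, s) \<in> A)"

definition clique_acyclic :: "'a set \<Rightarrow> ('a \<times> 'a) set \<Rightarrow> ('a \<times> 'a) set \<Rightarrow> bool" where
  "clique_acyclic V E A \<longleftrightarrow>
     (\<forall>K. K \<subseteq> V \<and> K \<noteq> {} \<and> clique E K \<longrightarrow> (\<exists>s. is_sink A K s))"

definition induced_arcs :: "('a \<times> 'a) set \<Rightarrow> 'a set \<Rightarrow> ('a \<times> 'a) set" where
  "induced_arcs A Z = A \<inter> (Z \<times> Z)"

definition stable :: "('a \<times> 'a) set \<Rightarrow> 'a set \<Rightarrow> bool" where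
  "stable A S \<longleftrightarrow> (\<forall>u\<in>S. \<forall>v\<in>S. (u, v) \<notin> A)"

definition absorbing :: "'a set \<Rightarrow> ('a \<times> 'a) set \<Rightarrow> 'a set \<Rightarrow> bool" where
  "absorbing V A S \<longleftrightarrow> (\<forall>u \<in> V - S. \<exists>v \<in> S. (u, v) \<in> A)"

definition kernel :: "'a set \<Rightarrow> ('a \<times> 'a) set \<Rightarrow> 'a set \<Rightarrow> bool" where
  "kernel V A S \<longleftrightarrow> S \<subseteq> V \<and> stable A S \<and> absorbing V A S"

end

theory Submission
  imports Defs
begin

text \<open>In a clique-acyclic orientation every triangle is transitively oriented, so an arc into
  a sink followed by an arc out of it can be shortcut whenever the endpoints are adjacent. In
  the augmented graph all vertices of X (resp. Y) have the same neighbours outside X \<union> Y, hence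
  a vertex u of X or Y that is not in Z reaches the kernel through sX, sY or sU and,
  if that vertex is not in the kernel, through its out-neighbour in the kernel. The only way
  this can fail is when sX is that out-neighbour of sY and u an out-neighbour of sX, and then
  transitivity would force the arc sX sY that the labelling excludes.\<close>

lemma orientation_subset: "orientation E A \<Longrightarrow> A \<subseteq> E"
  by (simp add: orientation_def)

lemma orientation_iff:
  assumes "orientation E A" "(u, v) \<in> E"
  shows "(u, v) \<in> A \<longleftrightarrow> (v, u) \<notin> A"
proof -
  have "case (u, v) of (u, v) \<Rightarrow> ((u, v) \<in> A \<longleftrightarrow> (v, u) \<notin> A)"
    using assms unfolding orientation_def by (elim conjE bspec)
  then show ?thesis by (simp only: prod.case)
qed

lemma orientation_asym:
  assumes "orientation E A" "(u, v) \<in> A"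
  shows "(v, u) \<notin> A"
proof -
  have "(u, v) \<in> E" using assms orientation_subset by blast
  then show ?thesis using orientation_iff[OF assms(1)] assms(2) by blast
qed

lemma orientation_total:
  assumes "orientation E A" "(u, v) \<in> E" "(u, v) \<notin> A"
  shows "(v, u) \<in> A"
  using orientation_iff[OF assms(1,2)] assms(3) by blast

lemma orientation_irrefl: "orientation E A \<Longrightarrow> (u, u) \<notin> A"
  using orientation_asym[of E A u u] by blast

lemma clique_acyclic_arc_trans:
  assumes "graph V E" "orientation E A" "clique_acyclic V E A"
    and ab: "(a, b) \<in> A" and bc: "(b, c) \<in> A" and ac: "(a, c) \<in> E"
  shows "(a, c) \<in> A"
proof -
  have arcs_E: "(a, b) \<in> E" "(b, c) \<in> E"
    using ab bc orientation_subset[OF assms(2)] by auto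
  have sym: "sym E" and EV: "E \<subseteq> V \<times> V"
    using \<open>graph V E\<close> unfolding graph_def by auto
  have "clique E {a, b, c}"
    using arcs_E ac symD[OF sym] unfolding clique_def by blast
  moreover have "{a, b, c} \<subseteq> V"
    using arcs_E EV by blast
  ultimately obtain t where t: "is_sink A {a, b, c} t"
    using \<open>clique_acyclic V E A\<close> unfolding clique_acyclic_def by blast
  have asym: "(v, u) \<notin> A" if "(u, v) \<in> A" for u v
    using orientation_asym[OF assms(2) that] .
  have distinct: "a \<noteq> b" "b \<noteq> c" "a \<noteq> c"
    using ab bc asym by blast+
  have "t \<noteq> a"
  proof
    assume "t = a"
    then have "(b, a) \<in> A" using t distinct unfolding is_sink_def by blast
    then show False using asym ab by blast
  qed
  moreover have "t \<noteq> b"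
  proof
    assume "t = b"
    then have "(c, b) \<in> A" using t distinct unfolding is_sink_def by blast
    then show False using asym bc by blast
  qed
  ultimately have "t = c" using t unfolding is_sink_def by blast
  then show ?thesis using t distinct unfolding is_sink_def by blast
qed

lemma is_sink_induced_arcsD:
  "is_sink (induced_arcs A K) K t \<Longrightarrow> u \<in> K \<Longrightarrow> u \<noteq> t \<Longrightarrow> (u, t) \<in> A"
  unfolding is_sink_def induced_arcs_def by blast

lemma is_sink_induced_arcs_out_arc:
  assumes "orientation E A" "is_sink (induced_arcs A K) K t" "(t, v) \<in> A"
  shows "v \<notin> K"
proof
  assume "v \<in> K"
  moreover have "v \<noteq> t" using assms(3) orientation_irrefl[OF assms(1)] by blast
  ultimately have "(v, t) \<in> A" using is_sink_induced_arcsD[OF assms(2)] by blast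
  then show False using orientation_asym[OF assms(1) assms(3)] by blast
qed

lemma kernel_induced_arcs_extend:
  assumes "kernel Z (induced_arcs A Z) S" "Z \<subseteq> V"
    and "\<And>u. u \<in> V - Z \<Longrightarrow> \<exists>v\<in>S. (u, v) \<in> A"
  shows "kernel V A S"
  using assms unfolding kernel_def stable_def absorbing_def induced_arcs_def by blast

lemma graph_aug:
  assumes "graph W F" "cobipartite X Y EXY" "(X \<union> Y) \<inter> W = {}"
  shows "graph (aug_V W x y X Y) (aug_E F x y X Y EXY)"
proof -
  have FW: "F \<subseteq> W \<times> W" and "sym F" and irrefl: "\<And>v. (v, v) \<notin> F"
    using assms(1) unfolding graph_def by auto
  have XY: "X \<inter> Y = {}" "EXY \<subseteq> X \<times> Y"
    using assms(2) unfolding cobipartite_def by auto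
  have "aug_E F x y X Y EXY \<subseteq> aug_V W x y X Y \<times> aug_V W x y X Y"
  proof
    fix p assume "p \<in> aug_E F x y X Y EXY"
    then show "p \<in> aug_V W x y X Y \<times> aug_V W x y X Y"
      using FW XY irrefl unfolding aug_E_def aug_V_def cobip_edges_def nbhd_def by auto
  qed
  moreover have "sym (aug_E F x y X Y EXY)"
    using \<open>sym F\<close> unfolding aug_E_def cobip_edges_def sym_def by blast
  moreover have "(v, v) \<notin> aug_E F x y X Y EXY" for v
    using irrefl XY FW assms(3) unfolding aug_E_def cobip_edges_def nbhd_def by blast
  ultimately show ?thesis unfolding graph_def by blast
qed

lemma aug_E_outside_X:
  assumes "graph W F" "cobipartite X Y EXY" "(X \<union> Y) \<inter> W = {}"
    and "a \<in> X" "w \<notin> X \<union> Y"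
  shows "(a, w) \<in> aug_E F x y X Y EXY \<longleftrightarrow> w \<in> nbhd F x - {y}"
  using assms unfolding graph_def cobipartite_def aug_E_def cobip_edges_def by auto

lemma aug_E_outside_Y:
  assumes "graph W F" "cobipartite X Y EXY" "(X \<union> Y) \<inter> W = {}"
    and "a \<in> Y" "w \<notin> X \<union> Y"
  shows "(a, w) \<in> aug_E F x y X Y EXY \<longleftrightarrow> w \<in> nbhd F y - {x}"
  using assms unfolding graph_def cobipartite_def aug_E_def cobip_edges_def by auto

locale clique_acyclic_augmentation =
  fixes W F x y X Y EXY and A :: "('a \<times> 'a) set"
  assumes graph: "graph W F"
    and cobip: "cobipartite X Y EXY"
    and disj: "(X \<union> Y) \<inter> W = {}"
    and orient: "orientation (aug_E F x y X Y EXY) A"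
    and acyclic: "clique_acyclic (aug_V W x y X Y) (aug_E F x y X Y EXY) A"
begin

abbreviation "V \<equiv> aug_V W x y X Y"
abbreviation "E \<equiv> aug_E F x y X Y EXY"

lemma arc_trans: "(a, b) \<in> A \<Longrightarrow> (b, c) \<in> A \<Longrightarrow> (a, c) \<in> E \<Longrightarrow> (a, c) \<in> A"
  using clique_acyclic_arc_trans[OF graph_aug[OF graph cobip disj] orient acyclic] .

lemma sym_E: "(a, b) \<in> E \<Longrightarrow> (b, a) \<in> E"
  using graph_aug[OF graph cobip disj] unfolding graph_def sym_def by blast

lemma same_side_outside_nbr:
  assumes "K \<in> {X, Y}" "a \<in> K" "b \<in> K" "w \<notin> X \<union> Y" "(a, w) \<in> E"
  shows "(b, w) \<in> E"
  using assms aug_E_outside_X[OF graph cobip disj] aug_E_outside_Y[OF graph cobip disj]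
  by blast

lemma arc_to_outside_through:
  assumes "K \<in> {X, Y}" "u \<in> K" "t \<in> K" "(u, t) \<in> A" "(t, w) \<in> A" "w \<notin> X \<union> Y"
  shows "(u, w) \<in> A"
proof -
  have "(t, w) \<in> E" using assms(5) orientation_subset[OF orient] by blast
  then have "(u, w) \<in> E" using same_side_outside_nbr assms by blast
  then show ?thesis using arc_trans assms(4,5) by blast
qed

context
  fixes sX sY sU :: 'a and U Z S :: "'a set"
  assumes sink_X: "is_sink (induced_arcs A X) X sX"
    and sink_Y: "is_sink (induced_arcs A Y) Y sY"
    and label: "(sX, sY) \<notin> A"
    and U_eq: "U = Y - nbhd E sX"
    and sink_U: "U \<noteq> {} \<Longrightarrow> is_sink (induced_arcs A U) U sU"
    and Z_eq: "Z = (V - (X \<union> Y)) \<union> {sX, sY} \<union> (if U = {} then {} else {sU})"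
    and kernel_Z: "kernel Z (induced_arcs A Z) S"
begin

lemma sinks_in: "sX \<in> X" "sY \<in> Y" "U \<noteq> {} \<Longrightarrow> sU \<in> U"
  using sink_X sink_Y sink_U unfolding is_sink_def by auto

lemma sU_not_adjacent: "U \<noteq> {} \<Longrightarrow> (sX, sU) \<notin> E"
  using sinks_in(3) unfolding U_eq nbhd_def by blast

lemma Z_cases:
  assumes "v \<in> Z"
  obtains "v \<notin> X \<union> Y" | "v = sX" | "v = sY" | "U \<noteq> {}" "v = sU"
  using assms unfolding Z_eq by (auto split: if_splits)

lemma kernel_out_arc:
  assumes "t \<in> Z" "t \<notin> S"
  obtains v where "v \<in> S" "v \<in> Z" "(t, v) \<in> A"
  using assms kernel_Z unfolding kernel_def absorbing_def induced_arcs_def by blast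

lemma absorbed_X:
  assumes "u \<in> X" "u \<noteq> sX"
  shows "\<exists>v\<in>S. (u, v) \<in> A"
proof (cases "sX \<in> S")
  case True
  then show ?thesis using is_sink_induced_arcsD[OF sink_X assms] by blast
next
  case False
  then obtain v where v: "v \<in> S" "v \<in> Z" "(sX, v) \<in> A"
    using kernel_out_arc Z_eq by blast
  have "v \<notin> X" using is_sink_induced_arcs_out_arc[OF orient sink_X v(3)] .
  moreover have "v \<noteq> sY" using label v(3) by blast
  moreover have "U \<noteq> {} \<Longrightarrow> v \<noteq> sU"
    using sU_not_adjacent v(3) orientation_subset[OF orient] by blast
  ultimately have "v \<notin> X \<union> Y" using sinks_in by (cases rule: Z_cases[OF v(2)]) auto
  then show ?thesis
    using arc_to_outside_through[of X u sX v] is_sink_induced_arcsD[OF sink_X assms] assms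
      sinks_in v by blast
qed

lemma absorbed_U:
  assumes "u \<in> U" "u \<noteq> sU" "u \<noteq> sY"
  shows "\<exists>v\<in>S. (u, v) \<in> A"
proof -
  have U: "U \<noteq> {}" and Y: "u \<in> Y" "sU \<in> Y" using assms sinks_in U_eq by auto
  have u_sU: "(u, sU) \<in> A" using is_sink_induced_arcsD[OF sink_U[OF U] assms(1,2)] .
  show ?thesis
  proof (cases "sU \<in> S")
    case False
    then obtain v where v: "v \<in> S" "v \<in> Z" "(sU, v) \<in> A"
      using kernel_out_arc U Z_eq by auto
    have "v \<notin> U" using is_sink_induced_arcs_out_arc[OF orient sink_U[OF U] v(3)] .
    moreover have "v \<noteq> sX"
      using sU_not_adjacent[OF U] v(3) orientation_subset[OF orient] sym_E by blast
    ultimately consider "v \<notin> X \<union> Y" | "v = sY"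
      using sinks_in U by (cases rule: Z_cases[OF v(2)]) auto
    then show ?thesis
    proof cases
      case 1
      then show ?thesis using arc_to_outside_through[of Y u sU v] u_sU Y v by blast
    next
      case 2
      then show ?thesis using is_sink_induced_arcsD[OF sink_Y Y(1) assms(3)] v by blast
    qed
  qed (use u_sU in blast)
qed

lemma absorbed_Y_nbr:
  assumes "u \<in> Y" "u \<noteq> sY" "(sX, u) \<in> E"
  shows "\<exists>v\<in>S. (u, v) \<in> A"
proof -
  have u_sY: "(u, sY) \<in> A" using is_sink_induced_arcsD[OF sink_Y assms(1,2)] .
  show ?thesis
  proof (cases "sY \<in> S")
    case False
    then obtain v where v: "v \<in> S" "v \<in> Z" "(sY, v) \<in> A"
      using kernel_out_arc Z_eq by blast
    have "v \<notin> Y" using is_sink_induced_arcs_out_arc[OF orient sink_Y v(3)] .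
    then consider "v \<notin> X \<union> Y" | "v = sX"
      using sinks_in U_eq by (cases rule: Z_cases[OF v(2)]) auto
    then show ?thesis
    proof cases
      case 1
      then show ?thesis using arc_to_outside_through[of Y u sY v] u_sY assms(1) sinks_in v by blast
    next
      case 2
      show ?thesis
      proof (rule ccontr)
        assume "\<not> ?thesis"
        then have "(u, sX) \<notin> A" using v(1) 2 by blast
        then have "(sX, u) \<in> A" using orientation_total[OF orient sym_E[OF assms(3)]] by blast
        moreover have "(sX, sY) \<in> E"
          using v(3) 2 orientation_subset[OF orient] sym_E by blast
        ultimately show False using arc_trans u_sY label by blast
      qed
    qed
  qed (use u_sY in blast)
qed

theorem kernel_induced_kernel: "kernel V A S"
proof (rule kernel_induced_arcs_extend[OF kernel_Z])
  show "Z \<subseteq> V" using sinks_in U_eq unfolding Z_eq aug_V_def by auto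
next
  fix u assume u: "u \<in> V - Z"
  then have "u \<in> X \<union> Y" "u \<noteq> sX" "u \<noteq> sY" "U \<noteq> {} \<Longrightarrow> u \<noteq> sU"
    unfolding Z_eq aug_V_def by auto
  then show "\<exists>v\<in>S. (u, v) \<in> A"
    using absorbed_X absorbed_Y_nbr absorbed_U U_eq unfolding nbhd_def by blast
qed

end

end

theorem lemma3:
  fixes W X Y :: "'a set" and F EXY A :: "('a \<times> 'a) set" and x y sX sY sU :: 'a
    and V U SU Z :: "'a set" and E :: "('a \<times> 'a) set"
  assumes H: "finite W" "graph W F"
    and flat: "flat_edge F x y"
    and B: "finite X" "finite Y" "cobipartite X Y EXY"
    and disj: "(X \<union> Y) \<inter> W = {}"
    and nonempty: "EXY \<noteq> {}"
    and G: "V = aug_V W x y X Y" "E = aug_E F x y X Y EXY"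
    and D: "orientation E A" "clique_acyclic V E A"
    and sinks: "is_sink (induced_arcs A X) X sX" "is_sink (induced_arcs A Y) Y sY"
    and label: "(sX, sY) \<notin> A"
    and U: "U = Y - nbhd E sX"
    and sU: "U \<noteq> {} \<Longrightarrow> is_sink (induced_arcs A U) U sU"
    and SU: "SU = (if U = {} then {} else {sU})"
    and Z: "Z = (V - (X \<union> Y)) \<union> {sX, sY} \<union> SU"
  shows "\<forall>S. kernel Z (induced_arcs A Z) S \<longrightarrow> kernel V A S"
proof -
  interpret clique_acyclic_augmentation W F x y X Y EXY A
    using H(2) B(3) disj D unfolding G by unfold_locales
  show ?thesis
    using kernel_induced_kernel[OF sinks label _ sU] U SU Z G by blast
qed

end
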